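(* Let $d\ge1$, $f$ a monic hyperbolic polynomial of degree $d$, $0\le s\le d$, and $u$ a composition of $d$ with $l=\ell(u)>s$. Then the map $P^{d-l}:H_s^u(f)\to\mathbb{R}^{l-s}$, $t^d+h_1t^{d-1}+\dots+h_d\mapsto(h_{s+1},\dots,h_l)$, is a homeomorphism onto its image, and its image is closed in $\mathbb{R}^{l-s}$.
   Context: Hyperbolic: all roots real. $f=t^d+f_1t^{d-1}+\dots+f_d$; $H_s(f)$ is the set of monic hyperbolic degree-$d$ polynomials $h=t^d+h_1t^{d-1}+\dots+h_d$ with $h_i=f_i$ for $1\le i\le s$, identified with $(h_{s+1},\dots,h_d)\in\mathbb{R}^{d-s}$ with the Euclidean subspace topology. Compositions of $d$: tuples of positive integers summing to $d$, length $\ell(u)$; $v\le u$ iff $v$ arises from $u$ by merging consecutive parts. $v(h)$ is the tuple of multiplicities of the distinct roots of $h$ in increasing order; $H_s^u(f)=\{h\in H_s(f):v(h)\le u\}$. *)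

theory Defs
  imports "HOL-Analysis.Analysis" "HOL-Computational_Algebra.Polynomial"
begin

definition hyperbolic :: "real poly \<Rightarrow> bool" where
  "hyperbolic h \<longleftrightarrow> (\<forall>z::complex. poly (map_poly complex_of_real h) z = 0 \<longrightarrow> z \<in> \<real>)"

definition mpoly :: "nat \<Rightarrow> (nat \<Rightarrow> real) \<Rightarrow> real poly" where
  "mpoly d c = monom 1 d + (\<Sum>i=1..d. monom (c i) (d - i))"

definition hcoeff :: "nat \<Rightarrow> real poly \<Rightarrow> nat \<Rightarrow> real" where
  "hcoeff d h i = coeff h (d - i)"

definition monic_deg :: "nat \<Rightarrow> real poly \<Rightarrow> bool" where
  "monic_deg d h \<longleftrightarrow> degree h = d \<and> lead_coeff h = 1"

definition composition :: "nat \<Rightarrow> nat list \<Rightarrow> bool" where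
  "composition d u \<longleftrightarrow> (\<forall>a\<in>set u. 0 < a) \<and> sum_list u = d"

inductive merge1 :: "nat list \<Rightarrow> nat list \<Rightarrow> bool" where
  "merge1 (xs @ a # b # ys) (xs @ (a + b) # ys)"

definition comp_le :: "nat list \<Rightarrow> nat list \<Rightarrow> bool" where
  "comp_le v u \<longleftrightarrow> merge1\<^sup>*\<^sup>* u v"

definition mult_tuple :: "real poly \<Rightarrow> nat list" where
  "mult_tuple h = map (\<lambda>r. order r h) (sorted_list_of_set {r. poly h r = 0})"

text \<open>H_s(f) as a subset of R^(d-s): points are functions nat \<Rightarrow> real supported on
  {s+1..d}, the value at i being the coefficient h_i.\<close>
definition Hpoly :: "nat \<Rightarrow> nat \<Rightarrow> real poly \<Rightarrow> (nat \<Rightarrow> real) \<Rightarrow> real poly" where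
  "Hpoly d s f x = mpoly d (\<lambda>i. if i \<le> s then hcoeff d f i else x i)"

definition Hs :: "nat \<Rightarrow> nat \<Rightarrow> real poly \<Rightarrow> (nat \<Rightarrow> real) set" where
  "Hs d s f = {x. (\<forall>i. i \<notin> {s<..d} \<longrightarrow> x i = 0) \<and> hyperbolic (Hpoly d s f x)}"

definition Hsu :: "nat \<Rightarrow> nat \<Rightarrow> real poly \<Rightarrow> nat list \<Rightarrow> (nat \<Rightarrow> real) set" where
  "Hsu d s f u = {x \<in> Hs d s f. comp_le (mult_tuple (Hpoly d s f x)) u}"

text \<open>Coordinate space R^(m-s), indexed by {s+1..m}.\<close>
definition coord_space :: "nat \<Rightarrow> nat \<Rightarrow> (nat \<Rightarrow> real) set" where
  "coord_space s m = {x. \<forall>i. i \<notin> {s<..m} \<longrightarrow> x i = 0}"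

definition proj :: "nat \<Rightarrow> nat \<Rightarrow> (nat \<Rightarrow> real) \<Rightarrow> (nat \<Rightarrow> real)" where
  "proj s l x = (\<lambda>i. if s < i \<and> i \<le> l then x i else 0)"

end

theory Submission
  imports Defs "HOL-Computational_Algebra.Fundamental_Theorem_Algebra"
begin

text \<open>Every \<open>h \<in> H\<^sub>s\<^sup>u(f)\<close> factors as \<open>\<Prod>\<^sub>j (t - a\<^sub>j)\<^bsup>u\<^sub>j\<^esup>\<close> with
  \<open>a\<^sub>1 \<le> \<dots> \<le> a\<^sub>l\<close>. Newton's identities turn \<open>h\<^sub>1, \<dots>, h\<^sub>l\<close> into the weighted power
  sums \<open>\<Sum>\<^sub>j u\<^sub>j a\<^sub>j\<^sup>k\<close>, \<open>k \<le> l\<close>, and a sign-change argument shows that these moments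
  determine the sorted tuple \<open>a\<close>; so the projection is injective. Since \<open>h\<^sub>1\<close> and \<open>h\<^sub>2\<close>
  bound \<open>\<Sum>\<^sub>j u\<^sub>j a\<^sub>j\<^sup>2\<close>, the roots stay bounded along any sequence whose projections
  converge, and Bolzano-Weierstrass yields a subsequence converging in \<open>H\<^sub>s\<^sup>u(f)\<close> to a
  preimage of the limit. Hence the continuous injective projection is a closed map with closed
  image.\<close>

section \<open>Polynomials with prescribed roots and multiplicities\<close>

definition roots_poly :: "nat list \<Rightarrow> real list \<Rightarrow> real poly" where
  "roots_poly u a = prod_list (map2 (\<lambda>m r. [:-r, 1:] ^ m) u a)"

lemma roots_poly_Nil [simp]: "roots_poly [] a = 1" "roots_poly u [] = 1"
  by (simp_all add: roots_poly_def)

lemma roots_poly_Cons [simp]: "roots_poly (m # u) (r # a) = [:-r, 1:] ^ m * roots_poly u a"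
  by (simp add: roots_poly_def)

lemma roots_poly_append:
  "length u = length a \<Longrightarrow> roots_poly (u @ v) (a @ b) = roots_poly u a * roots_poly v b"
  by (simp add: roots_poly_def zip_append)

definition linear_factors :: "real list \<Rightarrow> real poly" where
  "linear_factors t = prod_list (map (\<lambda>r. [:-r, 1:]) t)"

lemma roots_poly_ones: "roots_poly (replicate (length t) 1) t = linear_factors t"
  by (induction t) (simp_all add: linear_factors_def)

lemma roots_poly_nonzero: "roots_poly u a \<noteq> 0"
proof (induction u arbitrary: a)
  case (Cons m u) then show ?case by (cases a) auto
qed simp

lemma degree_roots_poly: "length u = length a \<Longrightarrow> degree (roots_poly u a) = sum_list u"
proof (induction u arbitrary: a)
  case (Cons m u) then show ?case
    by (cases a) (auto simp: degree_mult_eq roots_poly_nonzero degree_linear_power)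
qed simp

lemma lead_coeff_roots_poly: "lead_coeff (roots_poly u a) = 1"
proof (induction u arbitrary: a)
  case (Cons m u) then show ?case
    by (cases a) (auto simp: lead_coeff_mult lead_coeff_power)
qed simp

lemma poly_roots_poly_eq_0_iff:
  "length u = length a \<Longrightarrow> \<forall>m\<in>set u. 0 < m \<Longrightarrow> poly (roots_poly u a) x = 0 \<longleftrightarrow> x \<in> set a"
proof (induction u arbitrary: a)
  case (Cons m u) then show ?case by (cases a) auto
qed simp

lemma poly_roots_poly_nonzero: "x \<notin> set a \<Longrightarrow> poly (roots_poly u a) x \<noteq> 0"
proof (induction u arbitrary: a)
  case (Cons m u) then show ?case by (cases a) auto
qed simp

lemma order_roots_poly:
  "distinct a \<Longrightarrow> length u = length a \<Longrightarrow> map (\<lambda>x. order x (roots_poly u a)) a = u"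
proof (induction a arbitrary: u)
  case (Cons r a)
  then obtain m u' where u: "u = m # u'" "length u' = length a" by (cases u) auto
  have nz: "[:-r, 1:] ^ m * roots_poly u' a \<noteq> 0" using roots_poly_nonzero by simp
  have "order x (roots_poly u (r # a)) = order x ([:-r, 1:] ^ m) + order x (roots_poly u' a)" for x
    using u nz by (simp add: order_mult)
  moreover have "order r (roots_poly u' a) = 0"
    using Cons.prems poly_roots_poly_nonzero by (intro order_0I) auto
  moreover have "order x ([:-r, 1:] ^ m) = 0" if "x \<in> set a" for x
    using that Cons.prems by (intro order_0I) auto
  ultimately show ?case
    using Cons u by (simp add: order_power_n_n cong: map_cong)
qed simp

lemma mult_tuple_roots_poly:
  assumes "sorted_wrt (<) a" "length u = length a" "\<forall>m\<in>set u. 0 < m"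
  shows "mult_tuple (roots_poly u a) = u"
proof -
  have "{x. poly (roots_poly u a) x = 0} = set a"
    using poly_roots_poly_eq_0_iff assms by auto
  moreover have "sorted_list_of_set (set a) = a"
    using assms(1) by (simp add: strict_sorted_iff sorted_list_of_set.idem_if_sorted_distinct)
  ultimately show ?thesis
    using order_roots_poly assms by (simp add: mult_tuple_def strict_sorted_iff)
qed

lemma merge1_Cons: "merge1 u v \<Longrightarrow> merge1 (m # u) (m # v)"
  by (induction rule: merge1.induct) (use merge1.intros[of "m # _"] in simp)

lemma merge1_rtranclp_Cons: "merge1\<^sup>*\<^sup>* u v \<Longrightarrow> merge1\<^sup>*\<^sup>* (m # u) (m # v)"
  by (induction rule: rtranclp_induct) (auto intro: rtranclp.rtrancl_into_rtrancl merge1_Cons)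

lemma roots_poly_collect_equal_roots:
  assumes "sorted a" "length u = length a" "\<forall>m\<in>set u. 0 < m"
  obtains v b where "sorted_wrt (<) b" "length v = length b" "\<forall>m\<in>set v. 0 < m"
    "set b = set a" "roots_poly v b = roots_poly u a" "merge1\<^sup>*\<^sup>* u v"
  using assms
proof (induction a arbitrary: u thesis)
  case Nil then show ?case by auto
next
  case (Cons r a)
  obtain m u' where u: "u = m # u'" "length u' = length a"
    using Cons.prems(3) by (cases u) auto
  obtain v' b' where IH: "sorted_wrt (<) b'" "length v' = length b'" "\<forall>m\<in>set v'. 0 < m"
    "set b' = set a" "roots_poly v' b' = roots_poly u' a" "merge1\<^sup>*\<^sup>* u' v'"
    by (rule Cons.IH[of u']) (use Cons.prems u in auto)
  have r_le: "\<forall>x\<in>set b'. r \<le> x" using Cons.prems(2) IH(4) by auto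
  have merged: "merge1\<^sup>*\<^sup>* u (m # v')" using u IH(6) merge1_rtranclp_Cons by simp
  show ?case
  proof (cases "b' \<noteq> [] \<and> hd b' = r")
    case True
    then obtain m' v'' b'' where vb: "v' = m' # v''" "b' = r # b''"
      using IH(2) by (cases b'; cases v') auto
    have "merge1 (m # m' # v'') ((m + m') # v'')" using merge1.intros[of "[]"] by simp
    then have "merge1\<^sup>*\<^sup>* u ((m + m') # v'')" using merged vb by auto
    moreover have "roots_poly ((m + m') # v'') b' = roots_poly u (r # a)"
      using vb u IH(5) by (simp add: power_add mult.assoc)
    ultimately show ?thesis
      using IH vb by (intro Cons.prems(1)[of b' "(m + m') # v''"]) auto
  next
    case False
    then have "\<forall>x\<in>set b'. r < x"
      using r_le IH(1) by (cases b') (auto simp: order.order_iff_strict)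
    then show ?thesis
      using IH u merged Cons.prems(4) by (intro Cons.prems(1)[of "r # b'" "m # v'"]) auto
  qed
qed

lemma roots_poly_unmerge:
  "merge1\<^sup>*\<^sup>* u v \<Longrightarrow> sorted b \<Longrightarrow> length b = length v \<Longrightarrow>
   \<exists>a. sorted a \<and> length a = length u \<and> roots_poly u a = roots_poly v b"
proof (induction rule: converse_rtranclp_induct)
  case base then show ?case by auto
next
  case (step u w)
  then obtain a' where a': "sorted a'" "length a' = length w" "roots_poly w a' = roots_poly v b"
    by auto
  from step(1) obtain xs p q ys where uw: "u = xs @ p # q # ys" "w = xs @ (p + q) # ys"
    by (cases rule: merge1.cases) auto
  define as where "as = take (length xs) a'"
  define r where "r = a' ! length xs"
  define bs where "bs = drop (Suc (length xs)) a'"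
  have a'_eq: "a' = as @ r # bs" "length as = length xs"
    unfolding as_def r_def bs_def using a' uw by (simp_all add: id_take_nth_drop)
  have "sorted (as @ r # r # bs)" using a'(1) a'_eq by (auto simp: sorted_append)
  moreover have "length (as @ r # r # bs) = length u" using a' uw a'_eq by simp
  moreover have "roots_poly u (as @ r # r # bs) = roots_poly v b"
    using a'(3) uw a'_eq by (simp add: roots_poly_append power_add mult.assoc)
  ultimately show ?case by blast
qed

lemma map_poly_of_real_mult:
  "map_poly complex_of_real (p * q) = map_poly complex_of_real p * map_poly complex_of_real q"
  by (rule poly_eqI) (simp add: coeff_map_poly coeff_mult of_real_sum)

lemma poly_map_poly_of_real:
  "poly (map_poly complex_of_real p) (complex_of_real x) = complex_of_real (poly p x)"
  by (induction p) (auto simp: map_poly_pCons)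

lemma hyperbolic_one: "hyperbolic 1"
  by (simp add: hyperbolic_def)

lemma hyperbolic_mult: "hyperbolic p \<Longrightarrow> hyperbolic q \<Longrightarrow> hyperbolic (p * q)"
  unfolding hyperbolic_def by (auto simp: map_poly_of_real_mult)

lemma hyperbolic_mult_left: "hyperbolic (p * q) \<Longrightarrow> hyperbolic q"
  unfolding hyperbolic_def by (auto simp: map_poly_of_real_mult)

lemma hyperbolic_power: "hyperbolic p \<Longrightarrow> hyperbolic (p ^ n)"
  by (induction n) (simp_all add: hyperbolic_one hyperbolic_mult)

lemma hyperbolic_roots_poly: "hyperbolic (roots_poly u a)"
proof (induction u arbitrary: a)
  case (Cons m u)
  have "hyperbolic [:-r, 1:]" for r
    unfolding hyperbolic_def by (auto simp: map_poly_pCons)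
  with Cons show ?case
    by (cases a) (simp_all add: hyperbolic_one hyperbolic_mult hyperbolic_power)
qed (simp add: hyperbolic_one)

lemma hyperbolic_linear_factors:
  assumes "degree h = n" "lead_coeff h = 1" "hyperbolic h"
  shows "\<exists>t. length t = n \<and> h = linear_factors t"
  using assms
proof (induction n arbitrary: h)
  case 0
  then have "h = 1"
    by (auto elim: degree_eq_zeroE)
  then show ?case by (simp add: linear_factors_def)
next
  case (Suc n)
  have "degree (map_poly complex_of_real h) = Suc n"
    using Suc.prems by (simp add: degree_map_poly)
  then obtain z where z: "poly (map_poly complex_of_real h) z = 0"
    using fundamental_theorem_of_algebra constant_degree by (metis Zero_not_Suc)
  then obtain r where "z = complex_of_real r"
    using Suc.prems unfolding hyperbolic_def by (auto elim: Reals_cases)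
  then have "poly h r = 0" using z poly_map_poly_of_real[of h r] by simp
  then obtain q where q: "h = [:-r, 1:] * q" by (auto simp: poly_eq_0_iff_dvd elim: dvdE)
  then have "q \<noteq> 0" using Suc.prems by auto
  then have "degree h = degree [:-r, 1:] + degree q"
    unfolding q by (intro degree_mult_eq) auto
  moreover have "lead_coeff h = lead_coeff [:-r, 1:] * lead_coeff q"
    unfolding q by (rule lead_coeff_mult)
  ultimately have "degree q = n" "lead_coeff q = 1" using Suc.prems by simp_all
  moreover have "hyperbolic q" using Suc.prems q hyperbolic_mult_left by blast
  ultimately obtain t where "length t = n" "q = linear_factors t"
    using Suc.IH by blast
  then show ?case using q by (intro exI[of _ "r # t"]) (simp add: linear_factors_def)
qed

lemma linear_factors_sort: "linear_factors (sort t) = linear_factors t"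
proof -
  have "linear_factors t = prod_mset (image_mset (\<lambda>r. [:-r, 1:]) (mset t))" for t
    by (induction t) (simp_all add: linear_factors_def)
  then show ?thesis by simp
qed

lemma hyperbolic_comp_le_iff_roots_poly:
  assumes "monic_deg d h" "composition d u"
  shows "hyperbolic h \<and> comp_le (mult_tuple h) u \<longleftrightarrow>
    (\<exists>a. sorted a \<and> length a = length u \<and> h = roots_poly u a)"
proof
  assume h: "hyperbolic h \<and> comp_le (mult_tuple h) u"
  obtain t where "length t = d" "h = linear_factors t"
    using hyperbolic_linear_factors assms h unfolding monic_deg_def by blast
  then have t: "sorted (sort t)" "length (sort t) = d" "h = roots_poly (replicate d 1) (sort t)"
    using roots_poly_ones[of "sort t"] linear_factors_sort[of t] by auto
  obtain v b where vb: "sorted_wrt (<) b" "length v = length b" "\<forall>m\<in>set v. 0 < m"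
      "roots_poly v b = h"
    using roots_poly_collect_equal_roots[OF t(1), of "replicate d 1"] t by (metis length_replicate
        in_set_replicate zero_less_one)
  have "merge1\<^sup>*\<^sup>* u v"
    using h mult_tuple_roots_poly[OF vb(1-3)] vb(4) by (simp add: comp_le_def)
  then show "\<exists>a. sorted a \<and> length a = length u \<and> h = roots_poly u a"
    using roots_poly_unmerge[of u v b] vb by (auto simp: strict_sorted_iff)
next
  assume "\<exists>a. sorted a \<and> length a = length u \<and> h = roots_poly u a"
  then obtain a where a: "sorted a" "length a = length u" "h = roots_poly u a" by blast
  obtain v b where "sorted_wrt (<) b" "length v = length b" "\<forall>m\<in>set v. 0 < m"
      "roots_poly v b = h" "merge1\<^sup>*\<^sup>* u v"
    by (rule roots_poly_collect_equal_roots[OF a(1), of u])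
      (use a assms(2) in \<open>auto simp: composition_def\<close>)
  then show "hyperbolic h \<and> comp_le (mult_tuple h) u"
    using mult_tuple_roots_poly hyperbolic_roots_poly by (metis comp_le_def)
qed

section \<open>Newton's identities\<close>

definition expand_roots :: "nat list \<Rightarrow> real list \<Rightarrow> real list" where
  "expand_roots u a = concat (map2 (\<lambda>m r. replicate m r) u a)"

lemma expand_roots_Cons [simp]: "expand_roots (m # u) (r # a) = replicate m r @ expand_roots u a"
  by (simp add: expand_roots_def)

lemma roots_poly_eq_linear_factors: "roots_poly u a = linear_factors (expand_roots u a)"
proof (induction u arbitrary: a)
  case Nil then show ?case by (simp add: linear_factors_def expand_roots_def)
next
  case (Cons m u) then show ?case
    by (cases a) (auto simp: linear_factors_def expand_roots_def prod_list_replicate)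
qed

lemma length_expand_roots: "length u = length a \<Longrightarrow> length (expand_roots u a) = sum_list u"
proof (induction u arbitrary: a)
  case Nil then show ?case by (simp add: expand_roots_def)
next
  case (Cons m u) then show ?case by (cases a) auto
qed

lemma degree_linear_factors: "degree (linear_factors t) = length t"
proof -
  have "degree (roots_poly (replicate (length t) 1) t) = length t"
    by (simp add: degree_roots_poly sum_list_replicate)
  then show ?thesis by (simp only: roots_poly_ones)
qed

definition power_sum :: "real list \<Rightarrow> nat \<Rightarrow> real" where
  "power_sum t k = (\<Sum>x\<leftarrow>t. x ^ k)"

lemma power_sum_expand_roots:
  "length u = length a \<Longrightarrow> power_sum (expand_roots u a) k = (\<Sum>j<length u. real (u ! j) * (a ! j) ^ k)"
proof (induction u arbitrary: a)
  case Nil then show ?case by (simp add: expand_roots_def power_sum_def)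
next
  case (Cons m u)
  then obtain r a' where a: "a = r # a'" by (cases a) auto
  have "power_sum (expand_roots (m # u) a) k = real m * r ^ k + power_sum (expand_roots u a') k"
    using a by (simp add: power_sum_def sum_list_replicate)
  also have "\<dots> = (\<Sum>j<length (m # u). real ((m # u) ! j) * (a ! j) ^ k)"
    using Cons a by (simp add: sum.lessThan_Suc_shift del: sum.lessThan_Suc)
  finally show ?case .
qed

text \<open>The coefficients of \<open>\<Prod>(1 - r X)\<close> are the signed elementary symmetric functions
  of the roots \<open>t\<close>.\<close>
definition sym_fps :: "real list \<Rightarrow> real fps" where
  "sym_fps t = prod_list (map (\<lambda>r. 1 + fps_const (-r) * fps_X) t)"

lemma fps_of_poly_reflect_linear_factors:
  "fps_of_poly (reflect_poly (linear_factors t)) = sym_fps t"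
proof (induction t)
  case Nil then show ?case by (simp add: linear_factors_def sym_fps_def)
next
  case (Cons r t)
  have "reflect_poly [:-r, 1:] = [:1, -r:]" by (simp add: reflect_poly_def)
  then show ?case using Cons
    by (simp only: linear_factors_def sym_fps_def list.map prod_list.Cons reflect_poly_mult
        fps_of_poly_mult fps_of_poly_linear')
qed

lemma sym_fps_nth_eq_coeff:
  "k \<le> length t \<Longrightarrow> fps_nth (sym_fps t) k = coeff (linear_factors t) (length t - k)"
  by (simp flip: fps_of_poly_reflect_linear_factors add: coeff_reflect_poly degree_linear_factors)

lemma sym_fps_nth_0 [simp]: "fps_nth (sym_fps t) 0 = 1"
  by (induction t) (simp_all add: sym_fps_def fps_mult_nth)

lemma linear_factor_mult_geometric:
  "(1 + fps_const (-r) * fps_X) * Abs_fps (\<lambda>k. r ^ Suc k) = fps_const (r::real)"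
proof (rule fps_ext)
  fix n
  have "(1 + fps_const (-r) * fps_X) * Abs_fps (\<lambda>k. r ^ Suc k)
      = Abs_fps (\<lambda>k. r ^ Suc k) - fps_const r * (fps_X * Abs_fps (\<lambda>k. r ^ Suc k))"
    by (simp add: algebra_simps fps_const_neg[symmetric] del: fps_const_neg)
  then show "fps_nth ((1 + fps_const (-r) * fps_X) * Abs_fps (\<lambda>k. r ^ Suc k)) n
      = fps_nth (fps_const r) n"
    by (cases n) (simp_all add: fps_X_mult_nth)
qed

lemma fps_deriv_sym_fps: "fps_deriv (sym_fps t) = - (sym_fps t * Abs_fps (\<lambda>k. power_sum t (Suc k)))"
proof (induction t)
  case Nil
  have "Abs_fps (\<lambda>k. power_sum [] (Suc k)) = 0" by (rule fps_ext) (simp add: power_sum_def)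
  then show ?case by (simp add: sym_fps_def)
next
  case (Cons r t)
  define L where "L = (1 + fps_const (-r) * fps_X :: real fps)"
  define R where "R = Abs_fps (\<lambda>k. r ^ Suc k)"
  define S where "S = Abs_fps (\<lambda>k. power_sum t (Suc k))"
  define G where "G = sym_fps t"
  have LR: "L * R = fps_const r" unfolding L_def R_def by (rule linear_factor_mult_geometric)
  have "fps_deriv (sym_fps (r # t)) = fps_deriv L * G + L * fps_deriv G"
    by (simp add: sym_fps_def L_def G_def)
  also have "fps_deriv L = - (L * R)" unfolding LR by (simp add: L_def)
  also have "fps_deriv G = - (G * S)" using Cons.IH by (simp add: G_def S_def)
  also have "- (L * R) * G + L * - (G * S) = - (L * R * G + L * (G * S))" by simp
  also have "\<dots> = - (sym_fps (r # t) * (R + S))"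
    by (simp add: sym_fps_def L_def G_def algebra_simps)
  also have "R + S = Abs_fps (\<lambda>k. power_sum (r # t) (Suc k))"
    by (rule fps_ext) (simp add: power_sum_def R_def S_def)
  finally show ?case .
qed

lemma newton_identity:
  "of_nat (Suc k) * fps_nth (sym_fps t) (Suc k)
    = - (\<Sum>i=0..k. fps_nth (sym_fps t) i * power_sum t (Suc k - i))"
  using arg_cong[OF fps_deriv_sym_fps, of "\<lambda>F. fps_nth F k" t]
  by (simp add: fps_mult_nth Suc_diff_le)

lemma power_sum_1: "power_sum t 1 = - fps_nth (sym_fps t) 1"
  using newton_identity[of 0 t] by simp

lemma power_sum_2: "power_sum t 2 = (fps_nth (sym_fps t) 1)\<^sup>2 - 2 * fps_nth (sym_fps t) 2"
  using newton_identity[of 0 t] newton_identity[of 1 t]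
  by (simp add: numeral_2_eq_2 power2_eq_square algebra_simps)

lemma power_sum_eq_if_top_coeffs_eq:
  assumes "length t = n" "length t' = n" "l \<le> n"
    and "\<And>k. k \<le> l \<Longrightarrow> coeff (linear_factors t) (n - k) = coeff (linear_factors t') (n - k)"
    and "k \<le> l"
  shows "power_sum t k = power_sum t' k"
  using assms(5)
proof (induction k rule: less_induct)
  case (less k)
  show ?case
  proof (cases k)
    case 0 then show ?thesis using assms(1,2) by (simp add: power_sum_def sum_list_triv)
  next
    case (Suc j)
    have sym: "fps_nth (sym_fps t) i = fps_nth (sym_fps t') i" if "i \<le> l" for i
      using assms that sym_fps_nth_eq_coeff[of i] by auto
    have split: "(\<Sum>i=0..j. fps_nth (sym_fps x) i * power_sum x (Suc j - i))
        = power_sum x (Suc j) + (\<Sum>i=1..j. fps_nth (sym_fps x) i * power_sum x (Suc j - i))" for x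
      by (simp add: sum.atLeast_Suc_atMost)
    have "(\<Sum>i=1..j. fps_nth (sym_fps t) i * power_sum t (Suc j - i))
        = (\<Sum>i=1..j. fps_nth (sym_fps t') i * power_sum t' (Suc j - i))"
      using less Suc sym by (intro sum.cong refl) auto
    then show ?thesis
      using newton_identity[of j t] newton_identity[of j t'] split[of t] split[of t'] sym[of k]
        less Suc
      by simp
  qed
qed

section \<open>Sorted tuples are determined by their weighted moments\<close>

lemma exists_pderiv_eq: "\<exists>Q. pderiv Q = q \<and> degree Q \<le> Suc (degree (q :: real poly))"
proof -
  define Q where "Q = (\<Sum>k\<le>degree q. monom (coeff q k / real (Suc k)) (Suc k))"
  have "pderiv Q = (\<Sum>k\<le>degree q. monom (coeff q k) k)"
    unfolding Q_def by (simp add: higher_pderiv_sum[of 1, simplified] pderiv_monom del: of_nat_Suc)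
  also have "\<dots> = q" by (rule poly_as_sum_of_monoms)
  finally have "pderiv Q = q" .
  moreover have "degree Q \<le> Suc (degree q)"
    unfolding Q_def by (intro degree_sum_le order.trans[OF degree_monom_le]) auto
  ultimately show ?thesis by blast
qed

lemma poly_strict_mono_if_pderiv_nonneg:
  fixes Q :: "real poly"
  assumes "pderiv Q \<noteq> 0" "x < y" "\<And>z. x \<le> z \<Longrightarrow> z \<le> y \<Longrightarrow> 0 \<le> poly (pderiv Q) z"
  shows "poly Q x < poly Q y"
proof -
  have mono: "poly Q z \<le> poly Q z'" if "x \<le> z" "z \<le> z'" "z' \<le> y" for z z'
  proof (rule DERIV_nonneg_imp_increasing_open[of z z' "poly Q"])
    fix t assume "z < t" "t < z'"
    then show "\<exists>D. (poly Q has_real_derivative D) (at t) \<and> 0 \<le> D"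
      using poly_DERIV[of Q t] assms(3)[of t] that by (intro exI[of _ "poly (pderiv Q) t"]) auto
  next
    show "continuous_on {z..z'} (poly Q)"
      using continuous_on_poly[OF continuous_on_id] by (simp add: id_def)
  qed (use that in simp)
  show ?thesis
  proof (rule ccontr)
    assume not_less: "\<not> ?thesis"
    define c where "c = poly Q x"
    have "poly Q z = c" if "x \<le> z" "z \<le> y" for z
      using mono[of x z] mono[of z y] that not_less unfolding c_def by linarith
    then have "{x..y} \<subseteq> {z. poly (Q - [:c:]) z = 0}" by auto
    then have "infinite {z. poly (Q - [:c:]) z = 0}"
      using infinite_Icc[OF assms(2)] infinite_super by blast
    then have "Q - [:c:] = 0" using poly_roots_finite by blast
    then have "pderiv Q = 0" by (simp add: pderiv_diff pderiv_pCons)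
    then show False using assms(1) by simp
  qed
qed

lemma sum_poly_eq_sum_moments:
  fixes w c :: "nat \<Rightarrow> real" and Q :: "real poly"
  shows "(\<Sum>j<l. w j * poly Q (c j)) = (\<Sum>k\<le>degree Q. coeff Q k * (\<Sum>j<l. w j * c j ^ k))"
proof -
  have "(\<Sum>j<l. w j * poly Q (c j)) = (\<Sum>j<l. \<Sum>k\<le>degree Q. w j * (coeff Q k * c j ^ k))"
    by (simp add: poly_altdef sum_distrib_left)
  also have "\<dots> = (\<Sum>k\<le>degree Q. coeff Q k * (\<Sum>j<l. w j * c j ^ k))"
    by (subst sum.swap) (simp add: sum_distrib_left mult.left_commute)
  finally show ?thesis .
qed

text \<open>Write \<open>\<sigma>\<^sub>j\<close> for the sign of \<open>a\<^sub>j - b\<^sub>j\<close> and \<open>I\<^sub>j\<close> for the interval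
  between them. As both sequences are sorted, intervals of opposite nonzero sign do not overlap,
  so a polynomial \<open>q\<close> of degree \<open>< l\<close> can be built with \<open>\<sigma>\<^sub>j q \<ge> 0\<close> on every
  \<open>I\<^sub>j\<close>. For an antiderivative \<open>Q\<close> of \<open>q\<close> the sum \<open>\<Sum> w\<^sub>j (Q(a\<^sub>j) - Q(b\<^sub>j))\<close>
  vanishes by the moment equations, yet every term is nonnegative and those with
  \<open>\<sigma>\<^sub>j \<noteq> 0\<close> are positive.\<close>
context
  fixes a b :: "nat \<Rightarrow> real" and l :: nat
  assumes mono_a: "\<And>i j. i \<le> j \<Longrightarrow> j < l \<Longrightarrow> a i \<le> a j"
    and mono_b: "\<And>i j. i \<le> j \<Longrightarrow> j < l \<Longrightarrow> b i \<le> b j"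
begin

definition gap_sgn :: "nat \<Rightarrow> real" where "gap_sgn j = sgn (a j - b j)"
definition gap_lo :: "nat \<Rightarrow> real" where "gap_lo j = min (a j) (b j)"
definition gap_hi :: "nat \<Rightarrow> real" where "gap_hi j = max (a j) (b j)"

lemma gap_sgn_cases:
  "gap_sgn j = 1 \<and> b j < a j \<or> gap_sgn j = -1 \<and> a j < b j \<or> gap_sgn j = 0 \<and> a j = b j"
  unfolding gap_sgn_def by (cases "a j < b j"; cases "b j < a j") auto

lemma gap_lo_mono: "i \<le> j \<Longrightarrow> j < l \<Longrightarrow> gap_lo i \<le> gap_lo j"
  using mono_a[of i j] mono_b[of i j] unfolding gap_lo_def by auto

lemma gap_hi_mono: "i \<le> j \<Longrightarrow> j < l \<Longrightarrow> gap_hi i \<le> gap_hi j"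
  using mono_a[of i j] mono_b[of i j] unfolding gap_hi_def by auto

lemma gap_lo_le_hi: "gap_lo j \<le> gap_hi j"
  unfolding gap_lo_def gap_hi_def by auto

lemma opposite_gaps_disjoint:
  "i < j \<Longrightarrow> j < l \<Longrightarrow> gap_sgn i \<noteq> 0 \<Longrightarrow> gap_sgn j \<noteq> 0 \<Longrightarrow> gap_sgn i \<noteq> gap_sgn j \<Longrightarrow>
   gap_hi i \<le> gap_lo j \<and> gap_sgn j = - gap_sgn i"
  using mono_a[of i j] mono_b[of i j] gap_sgn_cases[of i] gap_sgn_cases[of j]
  unfolding gap_lo_def gap_hi_def by auto

text \<open>Invariant for building \<open>q\<close> over the first \<open>k\<close> gaps: \<open>i\<close> is the last of them with
  nonzero sign, \<open>\<sigma>\<^sub>i q \<ge> 0\<close> on \<open>[L, \<infinity>)\<close>, and every later gap of the same sign lies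
  to the right of \<open>L\<close>. A gap of opposite sign is absorbed by the factor \<open>hi\<^sub>i - x\<close>.\<close>
definition sign_certificate :: "nat \<Rightarrow> real poly \<Rightarrow> nat \<Rightarrow> real \<Rightarrow> bool" where
  "sign_certificate k q i L \<longleftrightarrow> i < k \<and> gap_sgn i \<noteq> 0 \<and> q \<noteq> 0 \<and> degree q < k \<and>
     (\<forall>j. i < j \<and> j < k \<longrightarrow> gap_sgn j = 0) \<and>
     (\<forall>j<k. \<forall>x. gap_lo j \<le> x \<and> x \<le> gap_hi j \<longrightarrow> 0 \<le> gap_sgn j * poly q x) \<and>
     (\<forall>x. L \<le> x \<longrightarrow> 0 \<le> gap_sgn i * poly q x) \<and> L \<le> gap_hi i \<and>
     (\<forall>j. k \<le> j \<and> j < l \<and> gap_sgn j = gap_sgn i \<longrightarrow> L \<le> gap_lo j)"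

lemma sign_certificate_first:
  assumes "k < l" "\<forall>j<k. gap_sgn j = 0" "gap_sgn k \<noteq> 0"
  shows "sign_certificate (Suc k) [:gap_sgn k:] k (gap_lo k)"
  using assms gap_lo_mono gap_lo_le_hi
  unfolding sign_certificate_def by (auto simp: less_Suc_eq)

lemma sign_certificate_zero:
  assumes "sign_certificate k q i L" "gap_sgn k = 0"
  shows "sign_certificate (Suc k) q i L"
  using assms unfolding sign_certificate_def by (auto simp: less_Suc_eq)

lemma sign_certificate_same:
  assumes "sign_certificate k q i L" "k < l" "gap_sgn k = gap_sgn i"
  shows "sign_certificate (Suc k) q k L"
  using assms gap_lo_le_hi[of k] unfolding sign_certificate_def by (auto simp: less_Suc_eq)

lemma sign_certificate_flip:
  assumes cert: "sign_certificate k q i L" and "k < l" "gap_sgn k \<noteq> 0" "gap_sgn k \<noteq> gap_sgn i"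
  shows "sign_certificate (Suc k) (q * [:gap_hi i, -1:]) k (gap_hi i)"
proof -
  define q' where "q' = q * [:gap_hi i, -1:]"
  have i: "i < k" "gap_sgn i \<noteq> 0" "q \<noteq> 0" "degree q < k" "L \<le> gap_hi i"
    and zero: "\<And>j. i < j \<Longrightarrow> j < k \<Longrightarrow> gap_sgn j = 0"
    and old: "\<And>j x. j < k \<Longrightarrow> gap_lo j \<le> x \<Longrightarrow> x \<le> gap_hi j \<Longrightarrow> 0 \<le> gap_sgn j * poly q x"
    and tail: "\<And>x. L \<le> x \<Longrightarrow> 0 \<le> gap_sgn i * poly q x"
    using cert unfolding sign_certificate_def by auto
  have poly_q': "poly q' x = poly q x * (gap_hi i - x)" for x
    by (simp add: q'_def algebra_simps)
  have beyond: "gap_hi i \<le> gap_lo j \<and> gap_sgn j = - gap_sgn i"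
    if "k \<le> j" "j < l" "gap_sgn j = gap_sgn k" for j
    using opposite_gaps_disjoint[of i j] that i assms(3,4) by auto
  have lin_nz: "[:gap_hi i, -1:] \<noteq> 0" by simp
  have "q' \<noteq> 0" unfolding q'_def using i(3) lin_nz by (rule no_zero_divisors)
  moreover have "degree q' < Suc k"
    unfolding q'_def using degree_mult_eq[OF i(3) lin_nz] i(4) by simp
  moreover have new_tail: "0 \<le> gap_sgn k * poly q' x" if "gap_hi i \<le> x" for x
  proof -
    have "0 \<le> (gap_sgn i * poly q x) * (x - gap_hi i)"
      using tail[of x] that i(5) by simp
    also have "\<dots> = gap_sgn k * poly q' x"
      using beyond[of k] assms(2-4) by (simp add: poly_q' algebra_simps)
    finally show ?thesis .
  qed
  moreover have "0 \<le> gap_sgn j * poly q' x"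
    if "j < Suc k" "gap_lo j \<le> x" "x \<le> gap_hi j" for j x
  proof (cases "j \<le> i")
    case True
    then have "x \<le> gap_hi i" using gap_hi_mono[of j i] i(1) assms(2) that by auto
    then have "0 \<le> (gap_sgn j * poly q x) * (gap_hi i - x)"
      using old[of j x] True i(1) that by simp
    then show ?thesis by (simp add: poly_q' algebra_simps)
  next
    case False
    then have "j = k \<or> gap_sgn j = 0" using zero[of j] that by (auto simp: less_Suc_eq)
    then show ?thesis
      using new_tail beyond[of k] that assms(2-4) by auto
  qed
  moreover have "gap_hi i \<le> gap_hi k" using gap_hi_mono[of i k] i(1) assms(2) by auto
  ultimately show ?thesis
    using assms(3) beyond unfolding sign_certificate_def q'_def[symmetric] by auto
qed

lemma sign_certificate_exists:
  "k \<le> l \<Longrightarrow> (\<forall>j<k. gap_sgn j = 0) \<or> (\<exists>q i L. sign_certificate k q i L)"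
proof (induction k)
  case (Suc k)
  then consider "\<forall>j<k. gap_sgn j = 0" | q i L where "sign_certificate k q i L"
    by fastforce
  then show ?case
  proof cases
    case 1
    then show ?thesis
      using sign_certificate_first[of k] Suc.prems
      by (cases "gap_sgn k = 0") (auto simp: less_Suc_eq)
  next
    case 2
    then have "gap_sgn i \<noteq> 0" by (simp add: sign_certificate_def)
    then show ?thesis
      using 2 sign_certificate_zero sign_certificate_same sign_certificate_flip Suc.prems
      by (metis Suc_le_lessD)
  qed
qed simp

lemma gap_increment_pos:
  assumes "pderiv Q \<noteq> 0" "gap_sgn j \<noteq> 0"
    and "\<And>x. gap_lo j \<le> x \<Longrightarrow> x \<le> gap_hi j \<Longrightarrow> 0 \<le> gap_sgn j * poly (pderiv Q) x"
  shows "poly Q (b j) < poly Q (a j)"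
  using gap_sgn_cases[of j]
proof (elim disjE conjE)
  assume "gap_sgn j = 1" "b j < a j"
  then show ?thesis
    using assms by (intro poly_strict_mono_if_pderiv_nonneg) (auto simp: gap_lo_def gap_hi_def)
next
  assume "gap_sgn j = -1" "a j < b j"
  then have "poly (- Q) (a j) < poly (- Q) (b j)"
    using assms by (intro poly_strict_mono_if_pderiv_nonneg)
      (auto simp: gap_lo_def gap_hi_def pderiv_minus)
  then show ?thesis by simp
qed (use assms in simp)

lemma sorted_eq_if_weighted_moments_eq:
  assumes pos: "\<And>j. j < l \<Longrightarrow> 0 < w j"
    and moments: "\<And>k. k \<le> l \<Longrightarrow> (\<Sum>j<l. w j * a j ^ k) = (\<Sum>j<l. w j * b j ^ k)"
    and "j < l"
  shows "a j = b j"
proof (rule ccontr)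
  assume "a j \<noteq> b j"
  then have "gap_sgn j \<noteq> 0" using gap_sgn_cases[of j] by auto
  then obtain q i L where cert: "sign_certificate l q i L"
    using sign_certificate_exists[of l] \<open>j < l\<close> by blast
  obtain Q where Q: "pderiv Q = q" "degree Q \<le> Suc (degree q)" using exists_pderiv_eq by blast
  have "degree Q \<le> l" using Q cert by (simp add: sign_certificate_def)
  then have "(\<Sum>j<l. w j * poly Q (a j)) = (\<Sum>j<l. w j * poly Q (b j))"
    using moments by (simp add: sum_poly_eq_sum_moments)
  moreover have "w j * poly Q (b j) \<le> w j * poly Q (a j)" if "j < l" for j
  proof (cases "gap_sgn j = 0")
    case True then show ?thesis using gap_sgn_cases[of j] by auto
  next
    case False
    then show ?thesis
      using gap_increment_pos[of Q j] cert Q pos[OF that] that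
      by (auto simp: sign_certificate_def)
  qed
  moreover have "w i * poly Q (b i) < w i * poly Q (a i)"
    using gap_increment_pos[of Q i] cert Q pos[of i] by (auto simp: sign_certificate_def)
  moreover have "i < l" using cert by (simp add: sign_certificate_def)
  ultimately show False
    using sum_strict_mono_ex1[of "{..<l}" "\<lambda>j. w j * poly Q (b j)" "\<lambda>j. w j * poly Q (a j)"]
    by auto
qed

end

lemma coeff_mpoly: "coeff (mpoly d c) n = (if n = d then 1 else if n < d then c (d - n) else 0)"
proof -
  have "(\<Sum>i=1..d. if d - i = n then c i else 0) = (\<Sum>i=1..d. if i = d - n \<and> n < d then c i else 0)"
    by (rule sum.cong) auto
  then show ?thesis by (auto simp: mpoly_def coeff_sum coeff_monom)
qed

lemma monic_deg_mpoly: "monic_deg d (mpoly d c)"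
proof -
  have "degree (mpoly d c) = d"
    by (intro order.antisym degree_le le_degree) (simp_all add: coeff_mpoly)
  then show ?thesis unfolding monic_deg_def by (simp add: coeff_mpoly)
qed

lemma coeff_Hpoly:
  "1 \<le> i \<Longrightarrow> i \<le> d \<Longrightarrow> coeff (Hpoly d s f x) (d - i) = (if i \<le> s then coeff f (d - i) else x i)"
  by (simp add: Hpoly_def coeff_mpoly hcoeff_def)

definition tail_coeffs :: "nat \<Rightarrow> nat \<Rightarrow> real poly \<Rightarrow> nat \<Rightarrow> real" where
  "tail_coeffs d s h = (\<lambda>i. if s < i \<and> i \<le> d then coeff h (d - i) else 0)"

lemma Hpoly_tail_coeffs:
  assumes "monic_deg d h" "\<And>i. 1 \<le> i \<Longrightarrow> i \<le> s \<Longrightarrow> coeff h (d - i) = coeff f (d - i)"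
  shows "Hpoly d s f (tail_coeffs d s h) = h"
proof (rule poly_eqI)
  fix n
  show "coeff (Hpoly d s f (tail_coeffs d s h)) n = coeff h n"
  proof (cases "n < d")
    case True
    then show ?thesis
      using coeff_Hpoly[of "d - n" d s f] assms(2)[of "d - n"] by (auto simp: tail_coeffs_def)
  next
    case False
    then show ?thesis
      using assms(1) by (auto simp: monic_deg_def Hpoly_def coeff_mpoly coeff_eq_0)
  qed
qed

lemma tail_coeffs_Hpoly: "x \<in> Hs d s f \<Longrightarrow> tail_coeffs d s (Hpoly d s f x) = x"
  by (rule ext) (auto simp: tail_coeffs_def Hs_def coeff_Hpoly)

lemma length_le_sum_list_pos: "\<forall>m\<in>set u. 0 < m \<Longrightarrow> length u \<le> sum_list (u :: nat list)"
  by (induction u) auto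

lemma composition_length_le: "composition d u \<Longrightarrow> length u \<le> d"
  using length_le_sum_list_pos by (auto simp: composition_def)

lemma mem_Hsu_iff:
  assumes "composition d u" "s \<le> d"
  shows "x \<in> Hsu d s f u \<longleftrightarrow> (\<exists>a. sorted a \<and> length a = length u \<and>
     x = tail_coeffs d s (roots_poly u a) \<and>
     (\<forall>i. 1 \<le> i \<and> i \<le> s \<longrightarrow> coeff (roots_poly u a) (d - i) = coeff f (d - i)))"
    (is "_ \<longleftrightarrow> (\<exists>a. ?roots a)")
proof
  assume x: "x \<in> Hsu d s f u"
  have "monic_deg d (Hpoly d s f x)" unfolding Hpoly_def by (rule monic_deg_mpoly)
  then obtain a where "sorted a" "length a = length u" "Hpoly d s f x = roots_poly u a"
    using x hyperbolic_comp_le_iff_roots_poly assms(1) by (auto simp: Hsu_def Hs_def)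
  moreover have "x = tail_coeffs d s (Hpoly d s f x)"
    using x tail_coeffs_Hpoly by (auto simp: Hsu_def)
  moreover have "coeff (Hpoly d s f x) (d - i) = coeff f (d - i)" if "1 \<le> i" "i \<le> s" for i
    using coeff_Hpoly[of i d s f x] that assms(2) by simp
  ultimately show "\<exists>a. ?roots a" by auto
next
  assume "\<exists>a. ?roots a"
  then obtain a where a: "?roots a" by blast
  have "monic_deg d (roots_poly u a)"
    using degree_roots_poly[of u a] lead_coeff_roots_poly[of u a] a assms(1)
    by (simp add: monic_deg_def composition_def)
  then have "Hpoly d s f x = roots_poly u a" using a by (auto intro: Hpoly_tail_coeffs)
  moreover have "\<forall>i. i \<notin> {s<..d} \<longrightarrow> x i = 0" using a by (auto simp: tail_coeffs_def)
  ultimately show "x \<in> Hsu d s f u"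
    using a hyperbolic_comp_le_iff_roots_poly[of d "roots_poly u a" u] assms(1) \<open>monic_deg d _\<close>
    by (auto simp: Hsu_def Hs_def)
qed

lemma sorted_roots_eq_if_top_coeffs_eq:
  assumes u: "composition d u" and a: "sorted a" "length a = length u"
    and b: "sorted b" "length b = length u"
    and coeffs: "\<And>k. k \<le> length u \<Longrightarrow> coeff (roots_poly u a) (d - k) = coeff (roots_poly u b) (d - k)"
  shows "a = b"
proof -
  define l where "l = length u"
  have pos: "\<forall>m\<in>set u. 0 < m" and sum: "sum_list u = d" using u by (auto simp: composition_def)
  have lengths: "length (expand_roots u a) = d" "length (expand_roots u b) = d"
    using length_expand_roots a b sum by auto
  have "power_sum (expand_roots u a) k = power_sum (expand_roots u b) k" if "k \<le> l" for k
    by (rule power_sum_eq_if_top_coeffs_eq[OF lengths, of l])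
      (use coeffs that composition_length_le[OF u] in
        \<open>simp_all add: l_def roots_poly_eq_linear_factors\<close>)
  then have moments: "(\<Sum>j<l. real (u ! j) * (a ! j) ^ k) = (\<Sum>j<l. real (u ! j) * (b ! j) ^ k)"
    if "k \<le> l" for k
    using that a b by (simp add: l_def power_sum_expand_roots)
  have "a ! j = b ! j" if "j < l" for j
  proof (rule sorted_eq_if_weighted_moments_eq[where w = "\<lambda>j. real (u ! j)"])
    show "a ! i \<le> a ! j" "b ! i \<le> b ! j" if "i \<le> j" "j < l" for i j
      using that a b by (simp_all add: l_def sorted_nth_mono)
    show "0 < real (u ! j)" if "j < l" for j using that pos by (simp add: l_def)
  qed (use moments that in auto)
  then show ?thesis using a b by (simp add: l_def nth_equalityI)
qed

lemma inj_on_proj_Hsu: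
  assumes "composition d u" "s \<le> d"
  shows "inj_on (proj s (length u)) (Hsu d s f u)"
proof (rule inj_onI)
  fix x y assume x: "x \<in> Hsu d s f u" and y: "y \<in> Hsu d s f u"
    and eq: "proj s (length u) x = proj s (length u) y"
  obtain a where a: "sorted a" "length a = length u" "x = tail_coeffs d s (roots_poly u a)"
     "\<forall>i. 1 \<le> i \<and> i \<le> s \<longrightarrow> coeff (roots_poly u a) (d - i) = coeff f (d - i)"
    using x mem_Hsu_iff[OF assms] by blast
  obtain b where b: "sorted b" "length b = length u" "y = tail_coeffs d s (roots_poly u b)"
     "\<forall>i. 1 \<le> i \<and> i \<le> s \<longrightarrow> coeff (roots_poly u b) (d - i) = coeff f (d - i)"
    using y mem_Hsu_iff[OF assms] by blast
  have "coeff (roots_poly u a) (d - k) = coeff (roots_poly u b) (d - k)" if "k \<le> length u" for k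
  proof -
    consider "k = 0" | "1 \<le> k" "k \<le> s" | "s < k" by linarith
    then show ?thesis
    proof cases
      case 1
      then show ?thesis
        using a b assms(1) lead_coeff_roots_poly[of u a] lead_coeff_roots_poly[of u b]
        by (simp add: degree_roots_poly composition_def)
    next
      case 3
      then show ?thesis
        using fun_cong[OF eq, of k] that composition_length_le[OF assms(1)] a(3) b(3)
        by (simp add: proj_def tail_coeffs_def)
    qed (use a b in auto)
  qed
  then show "x = y" using sorted_roots_eq_if_top_coeffs_eq[OF assms(1) a(1,2) b(1,2)] a b by simp
qed

section \<open>Limits along the projection\<close>

lemma tendsto_fun_iff_componentwise:
  fixes X :: "'a \<Rightarrow> nat \<Rightarrow> real"
  shows "(X \<longlongrightarrow> L) F \<longleftrightarrow> (\<forall>i. ((\<lambda>n. X n i) \<longlongrightarrow> L i) F)"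
  using limitin_componentwise[of "\<lambda>i. euclidean" UNIV X L F]
  by (simp add: euclidean_product_topology limitin_canonical_iff)

lemma continuous_on_proj: "continuous_on S (proj s l)"
proof (rule continuous_on_coordinatewise_then_product)
  fix i
  show "continuous_on S (\<lambda>x. proj s l x i)"
    by (cases "s < i \<and> i \<le> l")
      (auto simp: proj_def intro: continuous_on_subset[OF continuous_on_product_coordinates])
qed

lemma bounded_seq_componentwise_convergent_subseq:
  fixes X :: "nat \<Rightarrow> nat \<Rightarrow> real"
  assumes "\<And>n j. j < l \<Longrightarrow> \<bar>X n j\<bar> \<le> R"
  shows "\<exists>r L. strict_mono r \<and> (\<forall>j<l. (\<lambda>n. X (r n) j) \<longlonglongrightarrow> L j)"
  using assms
proof (induction l)
  case 0
  show ?case by (intro exI[of _ id]) (auto simp: strict_mono_def)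
next
  case (Suc l)
  then obtain r L where r: "strict_mono r" "\<forall>j<l. (\<lambda>n. X (r n) j) \<longlonglongrightarrow> L j" by auto
  have "bounded (range (\<lambda>n. X (r n) l))"
    unfolding bounded_iff using Suc.prems[of l] by auto
  then obtain c r' where r': "strict_mono r'" "((\<lambda>n. X (r n) l) \<circ> r') \<longlonglongrightarrow> c"
    using bounded_imp_convergent_subsequence by blast
  have "(\<lambda>n. X (r (r' n)) j) \<longlonglongrightarrow> (L(l := c)) j" if "j < Suc l" for j
    using r' r(2) that LIMSEQ_subseq_LIMSEQ[OF _ r'(1), of "\<lambda>n. X (r n) j"]
    by (cases "j = l") (auto simp: o_def)
  moreover have "strict_mono (\<lambda>n. r (r' n))" using strict_mono_o[OF r(1) r'(1)] by (simp add: o_def)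
  ultimately show ?case by blast
qed

lemma bounded_sorted_lists_convergent_subseq:
  fixes A :: "nat \<Rightarrow> real list"
  assumes "\<And>n. sorted (A n)" "\<And>n. length (A n) = l" "\<And>n j. j < l \<Longrightarrow> \<bar>A n ! j\<bar> \<le> R"
  obtains r a where "strict_mono r" "sorted a" "length a = l"
    "\<And>j. j < l \<Longrightarrow> (\<lambda>n. A (r n) ! j) \<longlonglongrightarrow> a ! j"
proof -
  obtain r L where r: "strict_mono r" "\<forall>j<l. (\<lambda>n. A (r n) ! j) \<longlonglongrightarrow> L j"
    using bounded_seq_componentwise_convergent_subseq[of l "\<lambda>n j. A n ! j" R] assms(3) by blast
  define a where "a = map L [0..<l]"
  have "a ! i \<le> a ! j" if "i \<le> j" "j < l" for i j
    using r(2) that assms(1,2) by (intro LIMSEQ_le[of "\<lambda>n. A (r n) ! i" _ "\<lambda>n. A (r n) ! j"])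
      (auto simp: a_def sorted_nth_mono)
  then have "sorted a" by (simp add: a_def sorted_iff_nth_mono)
  then show ?thesis using that[of r a] r by (simp add: a_def)
qed

lemma tendsto_coeff_mult:
  assumes "\<And>k. (\<lambda>n. coeff (P n) k) \<longlonglongrightarrow> coeff P0 k" "\<And>k. (\<lambda>n. coeff (Q n) k) \<longlonglongrightarrow> coeff Q0 k"
  shows "(\<lambda>n. coeff (P n * Q n :: real poly) k) \<longlonglongrightarrow> coeff (P0 * Q0) k"
  unfolding coeff_mult by (intro tendsto_sum tendsto_mult assms)

lemma tendsto_coeff_power:
  assumes "\<And>k. (\<lambda>n. coeff (P n) k) \<longlonglongrightarrow> coeff P0 k"
  shows "(\<lambda>n. coeff (P n ^ m :: real poly) k) \<longlonglongrightarrow> coeff (P0 ^ m) k"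
proof (induction m arbitrary: k)
  case (Suc m) then show ?case by (simp only: power_Suc) (intro tendsto_coeff_mult assms)
qed simp

lemma tendsto_coeff_roots_poly:
  assumes "\<And>n. length (A n) = length u" "length a = length u"
    "\<And>j. j < length u \<Longrightarrow> (\<lambda>n. A n ! j) \<longlonglongrightarrow> a ! j"
  shows "(\<lambda>n. coeff (roots_poly u (A n)) k) \<longlonglongrightarrow> coeff (roots_poly u a) k"
  using assms
proof (induction u arbitrary: A a k)
  case (Cons m u)
  obtain r a' where a: "a = r # a'" using Cons.prems(2) by (cases a) auto
  have A: "A n = hd (A n) # tl (A n)" for n using Cons.prems(1)[of n] by (cases "A n") auto
  have nth_A: "A n ! 0 = hd (A n)" "A n ! Suc j = tl (A n) ! j" for n j
    by (subst A; simp)+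
  have hd: "(\<lambda>n. hd (A n)) \<longlonglongrightarrow> r"
    using Cons.prems(3)[of 0] a by (simp add: nth_A)
  have "(\<lambda>n. coeff [:- hd (A n), 1:] k) \<longlonglongrightarrow> coeff [:- r, 1:] k" for k
    using tendsto_minus[OF hd] by (cases k) (simp_all add: coeff_pCons split: nat.split)
  moreover have "(\<lambda>n. coeff (roots_poly u (tl (A n))) k) \<longlonglongrightarrow> coeff (roots_poly u a') k" for k
  proof (rule Cons.IH)
    show "(\<lambda>n. tl (A n) ! j) \<longlonglongrightarrow> a' ! j" if "j < length u" for j
      using Cons.prems(3)[of "Suc j"] that a by (simp add: nth_A)
  qed (use Cons.prems a in auto)
  ultimately show ?case
    by (subst A) (simp only: a roots_poly_Cons, intro tendsto_coeff_mult tendsto_coeff_power)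
qed simp

lemma root_sq_le_power_sum:
  assumes "\<forall>m\<in>set u. 0 < m" "length a = length u" "j < length u"
  shows "(a ! j)\<^sup>2 \<le> power_sum (expand_roots u a) 2"
proof -
  have "(a ! j)\<^sup>2 \<le> real (u ! j) * (a ! j)\<^sup>2"
    using assms by (intro mult_le_cancel_right1[THEN iffD2]) (auto simp: Suc_le_eq)
  also have "\<dots> \<le> (\<Sum>i<length u. real (u ! i) * (a ! i)\<^sup>2)"
    using assms(3) by (intro member_le_sum) auto
  finally show ?thesis using assms(2) by (simp add: power_sum_expand_roots)
qed

text \<open>\<open>a\<^sub>j\<^sup>2\<close> is at most the second power sum \<open>h\<^sub>1\<^sup>2 - 2 h\<^sub>2\<close> (Newton); with a
  single root, \<open>h\<^sub>1 = -d a\<^sub>1\<close> suffices.\<close>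
lemma abs_root_le_if_top_coeffs_bounded:
  assumes u: "composition d u" and a: "length a = length u" "j < length u"
    and K1: "\<bar>coeff (roots_poly u a) (d - 1)\<bar> \<le> K"
    and K2: "2 \<le> length u \<Longrightarrow> \<bar>coeff (roots_poly u a) (d - 2)\<bar> \<le> K"
  shows "\<bar>a ! j\<bar> \<le> 1 + K\<^sup>2 + 2 * K"
proof -
  define t where "t = expand_roots u a"
  have pos: "\<forall>m\<in>set u. 0 < m" and sum: "sum_list u = d" using u by (auto simp: composition_def)
  have t: "length t = d" "roots_poly u a = linear_factors t"
    using length_expand_roots[of u a] a sum by (simp_all add: t_def roots_poly_eq_linear_factors)
  have sym1: "fps_nth (sym_fps t) 1 = coeff (roots_poly u a) (d - 1)"
    using sym_fps_nth_eq_coeff[of 1 t] t composition_length_le[OF u] a by simp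
  have "0 \<le> K" using K1 by linarith
  show ?thesis
  proof (cases "2 \<le> length u")
    case True
    have "fps_nth (sym_fps t) 2 = coeff (roots_poly u a) (d - 2)"
      using sym_fps_nth_eq_coeff[of 2 t] t composition_length_le[OF u] True by simp
    then have "(a ! j)\<^sup>2 \<le> K\<^sup>2 + 2 * K"
      using root_sq_le_power_sum[OF pos a] power_sum_2[of t] sym1 K1 K2[OF True]
        power_mono[of "\<bar>coeff (roots_poly u a) (d - 1)\<bar>" K 2]
      by (simp add: t_def) linarith
    moreover have "\<bar>a ! j\<bar> \<le> 1 + (a ! j)\<^sup>2"
      using zero_le_power2[of "\<bar>a ! j\<bar> - 1"] by (simp add: power2_eq_square algebra_simps)
    ultimately show ?thesis by linarith
  next
    case False
    then obtain r where "u = [d]" "a = [r]" "j = 0"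
      using a sum by (cases u; cases a) (auto simp: Suc_le_eq)
    moreover have "0 < d" using pos \<open>u = [d]\<close> by simp
    ultimately have "coeff (roots_poly u a) (d - 1) = - (real d * r)"
      using power_sum_1[of t] power_sum_expand_roots[of u a 1] sym1 a(1) by (simp add: t_def)
    then have "real d * \<bar>r\<bar> = \<bar>coeff (roots_poly u a) (d - 1)\<bar>"
      by (simp add: abs_mult)
    moreover have "\<bar>r\<bar> \<le> real d * \<bar>r\<bar>"
      using \<open>0 < d\<close> by (intro mult_le_cancel_right1[THEN iffD2]) auto
    ultimately have "\<bar>a ! j\<bar> \<le> K" using K1 \<open>a = [r]\<close> \<open>j = 0\<close> by simp
    moreover have "0 \<le> K\<^sup>2" by simp
    ultimately show ?thesis using \<open>0 \<le> K\<close> by linarith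
  qed
qed

lemma roots_bounded_if_top_coeffs_convergent:
  assumes u: "composition d u" "0 < length u" and A: "\<And>n. length (A n) = length u"
    and conv: "\<And>i. 1 \<le> i \<Longrightarrow> i \<le> length u \<Longrightarrow> convergent (\<lambda>n. coeff (roots_poly u (A n)) (d - i))"
  obtains R where "\<And>n j. j < length u \<Longrightarrow> \<bar>A n ! j\<bar> \<le> R"
proof -
  have bounded: "\<exists>K. \<forall>n. \<bar>coeff (roots_poly u (A n)) (d - i)\<bar> \<le> K"
    if "1 \<le> i" "i \<le> length u" for i
    using conv[OF that] convergent_imp_Bseq by (fastforce elim: BseqE)
  obtain K1 where K1: "\<And>n. \<bar>coeff (roots_poly u (A n)) (d - 1)\<bar> \<le> K1"
    using bounded[of 1] u(2) by auto
  obtain K2 where K2: "\<And>n. 2 \<le> length u \<Longrightarrow> \<bar>coeff (roots_poly u (A n)) (d - 2)\<bar> \<le> K2"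
    using bounded[of 2] by (cases "2 \<le> length u") auto
  define K where "K = max K1 K2"
  have "\<bar>A n ! j\<bar> \<le> 1 + K\<^sup>2 + 2 * K" if "j < length u" for n j
  proof (rule abs_root_le_if_top_coeffs_bounded[OF u(1) A that])
    show "\<bar>coeff (roots_poly u (A n)) (d - 1)\<bar> \<le> K"
      using K1[of n] by (simp add: K_def le_max_iff_disj)
    show "\<bar>coeff (roots_poly u (A n)) (d - 2)\<bar> \<le> K" if "2 \<le> length u"
      using K2[OF that, of n] by (simp add: K_def le_max_iff_disj)
  qed
  then show ?thesis using that by blast
qed

lemma Hsu_limit_of_roots:
  assumes u: "composition d u" "s \<le> d"
    and A: "\<And>n. length (A n) = length u"
      "\<And>n i. 1 \<le> i \<Longrightarrow> i \<le> s \<Longrightarrow> coeff (roots_poly u (A n)) (d - i) = coeff f (d - i)"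
    and a: "sorted a" "length a = length u" "\<And>j. j < length u \<Longrightarrow> (\<lambda>n. A n ! j) \<longlonglongrightarrow> a ! j"
  shows "tail_coeffs d s (roots_poly u a) \<in> Hsu d s f u"
    and "(\<lambda>n. tail_coeffs d s (roots_poly u (A n))) \<longlonglongrightarrow> tail_coeffs d s (roots_poly u a)"
proof -
  have coeffs: "(\<lambda>n. coeff (roots_poly u (A n)) k) \<longlonglongrightarrow> coeff (roots_poly u a) k" for k
    using A(1) a(2,3) by (rule tendsto_coeff_roots_poly)
  have "coeff (roots_poly u a) (d - i) = coeff f (d - i)" if "1 \<le> i" "i \<le> s" for i
    using coeffs[of "d - i"] A(2)[OF that] by (simp add: LIMSEQ_const_iff)
  then show "tail_coeffs d s (roots_poly u a) \<in> Hsu d s f u"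
    using mem_Hsu_iff[OF u] a(1,2) by blast
  show "(\<lambda>n. tail_coeffs d s (roots_poly u (A n))) \<longlonglongrightarrow> tail_coeffs d s (roots_poly u a)"
    using coeffs by (auto simp: tendsto_fun_iff_componentwise tail_coeffs_def)
qed

lemma Hsu_proj_limit_lifts:
  assumes u: "composition d u" "s \<le> d" "s < length u"
    and xs: "\<And>n. xs n \<in> Hsu d s f u"
    and lim: "(\<lambda>n. proj s (length u) (xs n)) \<longlonglongrightarrow> y"
  shows "\<exists>x\<in>Hsu d s f u. proj s (length u) x = y \<and> (\<exists>r. strict_mono r \<and> (xs \<circ> r) \<longlonglongrightarrow> x)"
proof -
  have "\<forall>n. \<exists>a. sorted a \<and> length a = length u \<and> xs n = tail_coeffs d s (roots_poly u a) \<and>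
      (\<forall>i. 1 \<le> i \<and> i \<le> s \<longrightarrow> coeff (roots_poly u a) (d - i) = coeff f (d - i))"
    using xs mem_Hsu_iff[OF u(1,2)] by blast
  from choice[OF this] obtain A where A: "\<And>n. sorted (A n)" "\<And>n. length (A n) = length u"
      "\<And>n. xs n = tail_coeffs d s (roots_poly u (A n))"
      "\<And>n i. 1 \<le> i \<Longrightarrow> i \<le> s \<Longrightarrow> coeff (roots_poly u (A n)) (d - i) = coeff f (d - i)"
    by blast
  have conv: "convergent (\<lambda>n. coeff (roots_poly u (A n)) (d - i))"
    if "1 \<le> i" "i \<le> length u" for i
  proof (cases "i \<le> s")
    case True then show ?thesis using A(4) that by (simp add: convergent_const)
  next
    case False
    have "(\<lambda>n. proj s (length u) (xs n) i) \<longlonglongrightarrow> y i"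
      using lim by (simp add: tendsto_fun_iff_componentwise)
    then have "(\<lambda>n. coeff (roots_poly u (A n)) (d - i)) \<longlonglongrightarrow> y i"
      using False that composition_length_le[OF u(1)] by (simp add: proj_def A(3) tail_coeffs_def)
    then show ?thesis by (rule convergentI)
  qed
  have "0 < length u" using u(3) by linarith
  then obtain R where "\<And>n j. j < length u \<Longrightarrow> \<bar>A n ! j\<bar> \<le> R"
    using roots_bounded_if_top_coeffs_convergent[where A = A, OF u(1) _ A(2) conv] by blast
  then obtain r a where r: "strict_mono r" "sorted a" "length a = length u"
      "\<And>j. j < length u \<Longrightarrow> (\<lambda>n. A (r n) ! j) \<longlonglongrightarrow> a ! j"
    using bounded_sorted_lists_convergent_subseq[where A = A, OF A(1,2)] by blast
  define x where "x = tail_coeffs d s (roots_poly u a)"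
  have "x \<in> Hsu d s f u" "(xs \<circ> r) \<longlonglongrightarrow> x"
    using Hsu_limit_of_roots[OF u(1,2), of "A \<circ> r" f a] A r by (simp_all add: x_def o_def)
  moreover have "proj s (length u) x = y"
  proof (rule LIMSEQ_unique)
    show "(\<lambda>n. proj s (length u) ((xs \<circ> r) n)) \<longlonglongrightarrow> proj s (length u) x"
      using continuous_on_tendsto_compose[OF continuous_on_proj[of UNIV] \<open>(xs \<circ> r) \<longlonglongrightarrow> x\<close>] by simp
    show "(\<lambda>n. proj s (length u) ((xs \<circ> r) n)) \<longlonglongrightarrow> y"
      using LIMSEQ_subseq_LIMSEQ[OF lim r(1)] by (simp add: o_def)
  qed
  ultimately show ?thesis using r(1) by blast
qed

lemma homeomorphism_closed_image_if_limits_lift: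
  fixes p :: "'a::first_countable_topology \<Rightarrow> 'b::first_countable_topology"
  assumes "continuous_on S p" "inj_on p S"
    and lift: "\<And>xs y. (\<And>n. xs n \<in> S) \<Longrightarrow> (\<lambda>n. p (xs n)) \<longlonglongrightarrow> y \<Longrightarrow>
      \<exists>x\<in>S. p x = y \<and> (\<exists>r. strict_mono r \<and> (xs \<circ> r) \<longlonglongrightarrow> x)"
  shows "(\<exists>g. homeomorphism S (p ` S) p g) \<and> closed (p ` S)"
proof -
  have closed_image: "closed (p ` U)" if U: "closedin (top_of_set S) U" for U
    unfolding closed_sequential_limits
  proof (intro allI impI)
    fix ys y assume ys: "(\<forall>n. ys n \<in> p ` U) \<and> ys \<longlonglongrightarrow> y"
    obtain C where C: "closed C" "U = S \<inter> C" using U by (auto simp: closedin_closed)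
    define xs where "xs n = inv_into U p (ys n)" for n
    have xs: "\<forall>n. xs n \<in> U \<and> p (xs n) = ys n"
      using ys by (simp add: xs_def inv_into_into f_inv_into_f)
    have "(\<lambda>n. p (xs n)) \<longlonglongrightarrow> y" using ys xs by simp
    then obtain x r where x: "x \<in> S" "p x = y" "strict_mono r" "(xs \<circ> r) \<longlonglongrightarrow> x"
      using lift[of xs y] xs C(2) by blast
    moreover have "\<forall>n. (xs \<circ> r) n \<in> C" using xs C(2) by simp
    ultimately have "x \<in> C" using C(1) closed_sequential_limits by blast
    then show "y \<in> p ` U" using x C(2) by auto
  qed
  then have "closed (p ` S)" by simp
  moreover have "closedin (top_of_set (p ` S)) (p ` U)" if "closedin (top_of_set S) U" for U
    using closed_image[OF that] closedin_imp_subset[OF that] by (intro closed_subset) auto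
  then obtain g where "homeomorphism S (p ` S) p g"
    by (rule homeomorphism_injective_closed_map[OF assms(1) refl assms(2)])
  ultimately show ?thesis by blast
qed

theorem mainTheorem6:
  fixes d s :: nat and f :: "real poly" and u :: "nat list"
  assumes "d \<ge> 1"
    and "monic_deg d f" and "hyperbolic f"
    and "s \<le> d"
    and "composition d u" and "length u > s"
  shows "(\<exists>g. homeomorphism (Hsu d s f u) (proj s (length u) ` Hsu d s f u)
                              (proj s (length u)) g)
       \<and> closedin (top_of_set (coord_space s (length u)))
                  (proj s (length u) ` Hsu d s f u)"
proof -
  have "(\<exists>g. homeomorphism (Hsu d s f u) (proj s (length u) ` Hsu d s f u) (proj s (length u)) g)
      \<and> closed (proj s (length u) ` Hsu d s f u)"
    using continuous_on_proj inj_on_proj_Hsu Hsu_proj_limit_lifts assms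
    by (intro homeomorphism_closed_image_if_limits_lift) auto
  moreover have "proj s (length u) ` Hsu d s f u \<subseteq> coord_space s (length u)"
    by (auto simp: proj_def coord_space_def)
  ultimately show ?thesis using closed_subset by blast
qed

end
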